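(* Let $a_1,a_2,\ldots\ge 0$, let $C(\theta)=\sum_{n\ge1}a_n\theta^n$ be finite for $\theta\in(0,s)$, fix $\theta\in(0,s)$ with $C(\theta)>0$ and $\alpha_1,\alpha_2,\alpha_3,\lambda>0$. Let $\mathbf Y=(Y_1,Y_2)$ have the $\mathrm{BGEPS}(\alpha_1,\alpha_2,\alpha_3,\lambda,\theta)$ distribution, with joint cdf $$F_{\mathbf Y}(y_1,y_2)=\begin{cases}C\big(\theta F_{GE}(y_1;\alpha_1+\alpha_3,\lambda)F_{GE}(y_2;\alpha_2,\lambda)\big)/C(\theta) & y_1\le y_2,\\ C\big(\theta F_{GE}(y_1;\alpha_1,\lambda)F_{GE}(y_2;\alpha_2+\alpha_3,\lambda)\big)/C(\theta) & y_1>y_2.\end{cases}$$ Then the joint density of $\mathbf Y$ is $f_1(y_1,y_2)$ on $\{0<y_1<y_2\}$, $f_2(y_1,y_2)$ on $\{0<y_2<y_1\}$, and $f_0(y)$ on the diagonal $\{0<y_1=y_2=y\}$, in the sense that for every Borel set $A\subseteq(0,\infty)^2$, $$P(\mathbf Y\in A)=\iint_{A\cap\{y_1<y_2\}}f_1\,dy_1dy_2+\iint_{A\cap\{y_2<y_1\}}f_2\,dy_1dy_2+\int_{\{y:(y,y)\in A\}}f_0(y)\,dy,$$ where, writing $K_1=F_{GE}(y_1;\alpha_1+\alpha_3,\lambda)F_{GE}(y_2;\alpha_2,\lambda)$, $K_2=F_{GE}(y_1;\alpha_1,\lambda)F_{GE}(y_2;\alpha_2+\alpha_3,\lambda)$ and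 $K_0=F_{GE}(y;\alpha_1+\alpha_2+\alpha_3,\lambda)$, $$f_1(y_1,y_2)=\frac{\theta}{C(\theta)}f_{GE}(y_1;\alpha_1+\alpha_3,\lambda)f_{GE}(y_2;\alpha_2,\lambda)\big[\theta K_1C''(\theta K_1)+C'(\theta K_1)\big],$$ $$f_2(y_1,y_2)=\frac{\theta}{C(\theta)}f_{GE}(y_1;\alpha_1,\lambda)f_{GE}(y_2;\alpha_2+\alpha_3,\lambda)\big[\theta K_2C''(\theta K_2)+C'(\theta K_2)\big],$$ $$f_0(y)=\frac{\theta\,\alpha_3}{C(\theta)(\alpha_1+\alpha_2+\alpha_3)}f_{GE}(y;\alpha_1+\alpha_2+\alpha_3,\lambda)\,C'(\theta K_0).$$
   Context: For $\alpha,\lambda>0$ and $x>0$: $F_{GE}(x;\alpha,\lambda)=(1-e^{-\lambda x})^{\alpha}$ and $f_{GE}(x;\alpha,\lambda)=\alpha\lambda e^{-\lambda x}(1-e^{-\lambda x})^{\alpha-1}$ (generalized exponential cdf and pdf). $C'$ and $C''$ denote the first and second derivatives of $C$. *)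

theory Defs
  imports "HOL-Probability.Probability"
begin

definition F_GE :: "real \<Rightarrow> real \<Rightarrow> real \<Rightarrow> real" where
  "F_GE x \<alpha> lam = (if x \<le> 0 then 0 else (1 - exp (- lam * x)) powr \<alpha>)"

definition f_GE :: "real \<Rightarrow> real \<Rightarrow> real \<Rightarrow> real" where
  "f_GE x \<alpha> lam = (if x \<le> 0 then 0 else
     \<alpha> * lam * exp (- lam * x) * (1 - exp (- lam * x)) powr (\<alpha> - 1))"

definition PS_C :: "(nat \<Rightarrow> real) \<Rightarrow> real \<Rightarrow> real" where
  "PS_C a t = (\<Sum>n. a (Suc n) * t ^ Suc n)"

definition BGEPS_cdf ::
  "(nat \<Rightarrow> real) \<Rightarrow> real \<Rightarrow> real \<Rightarrow> real \<Rightarrow> real \<Rightarrow> real \<Rightarrow> real \<Rightarrow> real \<Rightarrow> real" where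
  "BGEPS_cdf a \<alpha>1 \<alpha>2 \<alpha>3 lam \<theta> y1 y2 =
     (if y1 \<le> y2
      then PS_C a (\<theta> * F_GE y1 (\<alpha>1 + \<alpha>3) lam * F_GE y2 \<alpha>2 lam) / PS_C a \<theta>
      else PS_C a (\<theta> * F_GE y1 \<alpha>1 lam * F_GE y2 (\<alpha>2 + \<alpha>3) lam) / PS_C a \<theta>)"

definition BGEPS_f1 ::
  "(nat \<Rightarrow> real) \<Rightarrow> real \<Rightarrow> real \<Rightarrow> real \<Rightarrow> real \<Rightarrow> real \<Rightarrow> real \<Rightarrow> real \<Rightarrow> real" where
  "BGEPS_f1 a \<alpha>1 \<alpha>2 \<alpha>3 lam \<theta> y1 y2 =
     (let C = PS_C a; K = F_GE y1 (\<alpha>1 + \<alpha>3) lam * F_GE y2 \<alpha>2 lam in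
      \<theta> / C \<theta> * f_GE y1 (\<alpha>1 + \<alpha>3) lam * f_GE y2 \<alpha>2 lam *
      (\<theta> * K * deriv (deriv C) (\<theta> * K) + deriv C (\<theta> * K)))"

definition BGEPS_f2 ::
  "(nat \<Rightarrow> real) \<Rightarrow> real \<Rightarrow> real \<Rightarrow> real \<Rightarrow> real \<Rightarrow> real \<Rightarrow> real \<Rightarrow> real \<Rightarrow> real" where
  "BGEPS_f2 a \<alpha>1 \<alpha>2 \<alpha>3 lam \<theta> y1 y2 =
     (let C = PS_C a; K = F_GE y1 \<alpha>1 lam * F_GE y2 (\<alpha>2 + \<alpha>3) lam in
      \<theta> / C \<theta> * f_GE y1 \<alpha>1 lam * f_GE y2 (\<alpha>2 + \<alpha>3) lam *
      (\<theta> * K * deriv (deriv C) (\<theta> * K) + deriv C (\<theta> * K)))"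

definition BGEPS_f0 ::
  "(nat \<Rightarrow> real) \<Rightarrow> real \<Rightarrow> real \<Rightarrow> real \<Rightarrow> real \<Rightarrow> real \<Rightarrow> real \<Rightarrow> real" where
  "BGEPS_f0 a \<alpha>1 \<alpha>2 \<alpha>3 lam \<theta> y =
     (let C = PS_C a; K = F_GE y (\<alpha>1 + \<alpha>2 + \<alpha>3) lam in
      \<theta> * \<alpha>3 / (C \<theta> * (\<alpha>1 + \<alpha>2 + \<alpha>3)) * f_GE y (\<alpha>1 + \<alpha>2 + \<alpha>3) lam * deriv C (\<theta> * K))"

end

theory Submission
  imports Defs
begin

text \<open>
  Up to the factor \<open>1 / C \<theta>\<close>,
  \<open>f\<^sub>1\<close> is the mixed partial derivative of \<open>C (\<theta> F(y\<^sub>1; \<beta>) F(y\<^sub>2; \<gamma>))\<close> with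
  \<open>\<beta> = \<alpha>\<^sub>1 + \<alpha>\<^sub>3\<close>, \<open>\<gamma> = \<alpha>\<^sub>2\<close>, so its mass on a lower quadrant is computed by integrating twice.
  The inner integration stops at the diagonal, where \<open>F(y; \<beta>) F(y; \<gamma>) = F(y; \<beta> + \<gamma>)\<close>, and
  therefore misses \<open>\<beta> / (\<beta> + \<gamma>) C (\<theta> F(m; \<alpha>))\<close> with \<open>\<alpha> = \<alpha>\<^sub>1 + \<alpha>\<^sub>2 + \<alpha>\<^sub>3\<close>;
  likewise for \<open>f\<^sub>2\<close>. The two weights \<open>(\<alpha>\<^sub>1 + \<alpha>\<^sub>3) / \<alpha>\<close> and \<open>(\<alpha>\<^sub>2 + \<alpha>\<^sub>3) / \<alpha>\<close> add up to
  \<open>1 + \<alpha>\<^sub>3 / \<alpha>\<close>, and the excess is exactly the diagonal mass. So the candidate agrees with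
  the given cdf on all lower quadrants, which form an \<open>\<inter>\<close>-stable generator of the Borel sets
  of the plane; hence it is the law of \<open>Y\<close>.
\<close>

lemma nn_integral_FTC_open_interval:
  fixes f F :: "real \<Rightarrow> real" and a b :: real
  assumes "a < b"
    and F_deriv: "\<And>x. a < x \<Longrightarrow> x < b \<Longrightarrow> (F has_real_derivative f x) (at x)"
    and f_cont: "\<And>x. a < x \<Longrightarrow> x < b \<Longrightarrow> isCont f x"
    and f_nonneg: "\<And>x. a < x \<Longrightarrow> x < b \<Longrightarrow> 0 \<le> f x"
    and F_cont: "isCont F a" "isCont F b"
  shows "(\<integral>\<^sup>+x. ennreal (f x) * indicator {a<..<b} x \<partial>lborel) = ennreal (F b - F a)"
    and "F a \<le> F b"
proof -
  have lim_a: "((F \<circ> real_of_ereal) \<longlongrightarrow> F a) (at_right (ereal a))"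
    using F_cont(1) by (simp add: ereal_tendsto_simps isCont_def filterlim_at_split)
  have lim_b: "((F \<circ> real_of_ereal) \<longlongrightarrow> F b) (at_left (ereal b))"
    using F_cont(2) by (simp add: ereal_tendsto_simps isCont_def filterlim_at_split)
  have ivl: "einterval (ereal a) (ereal b) = {a<..<b}" by (auto simp: einterval_def)
  from interval_integral_FTC_nonneg[of "ereal a" "ereal b" F f, OF _ _ _ _ lim_a lim_b]
  have "set_integrable lborel {a<..<b} f" "(LBINT x:{a<..<b}. f x) = F b - F a"
    using assms by (auto simp: ivl interval_lebesgue_integral_def)
  moreover have "\<And>x. 0 \<le> indicator {a<..<b} x * f x"
    using f_nonneg by (simp split: split_indicator)
  ultimately have "(\<integral>\<^sup>+x. ennreal (indicator {a<..<b} x * f x) \<partial>lborel) = ennreal (F b - F a)"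
    and "0 \<le> F b - F a"
    by (auto simp: set_integrable_def set_lebesgue_integral_def nn_integral_eq_integral
        simp flip: \<open>(LBINT x:{a<..<b}. f x) = F b - F a\<close> intro!: integral_nonneg_AE)
  moreover have "(\<integral>\<^sup>+x. ennreal (f x) * indicator {a<..<b} x \<partial>lborel)
      = (\<integral>\<^sup>+x. ennreal (indicator {a<..<b} x * f x) \<partial>lborel)"
    by (intro nn_integral_cong) (simp split: split_indicator)
  ultimately show "(\<integral>\<^sup>+x. ennreal (f x) * indicator {a<..<b} x \<partial>lborel) = ennreal (F b - F a)"
    and "F a \<le> F b"
    by simp_all
qed

definition sum_measure :: "'a measure \<Rightarrow> 'a measure \<Rightarrow> 'a measure" where
  "sum_measure M N = measure_of (space M) (sets M) (\<lambda>A. emeasure M A + emeasure N A)"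

lemma sets_sum_measure [simp]: "sets (sum_measure M N) = sets M"
  unfolding sum_measure_def by (simp add: sets.sets_measure_of_eq)

lemma emeasure_sum_measure:
  assumes "sets N = sets M" "A \<in> sets M"
  shows "emeasure (sum_measure M N) A = emeasure M A + emeasure N A"
  unfolding sum_measure_def
proof (rule emeasure_measure_of_sigma[OF sets.sigma_algebra_axioms _ _ assms(2)])
  show "positive (sets M) (\<lambda>A. emeasure M A + emeasure N A)"
    by (simp add: positive_def)
  show "countably_additive (sets M) (\<lambda>A. emeasure M A + emeasure N A)"
    using assms(1) by (auto simp: countably_additive_def suminf_add[symmetric] suminf_emeasure)
qed

lemma nn_integral_lborel_fst:
  fixes f :: "'a::euclidean_space \<times> 'b::euclidean_space \<Rightarrow> ennreal"
  assumes "f \<in> borel_measurable borel"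
  shows "(\<integral>\<^sup>+p. f p \<partial>lborel) = (\<integral>\<^sup>+x. \<integral>\<^sup>+y. f (x, y) \<partial>lborel \<partial>lborel)"
  using assms lborel.nn_integral_fst[of f lborel] by (simp add: lborel_prod)

lemma borel_measurable_indicator_continuous_on:
  fixes g :: "'a::topological_space \<Rightarrow> real"
  assumes "S \<in> sets borel" "S \<subseteq> U" "continuous_on U g"
  shows "(\<lambda>x. indicator S x * g x) \<in> borel_measurable borel"
  using borel_measurable_continuous_on_indicator[OF assms(1) continuous_on_subset[OF assms(3,2)]]
  by simp

lemma nn_integral_lborel_swap:
  fixes f :: "'a::euclidean_space \<times> 'b::euclidean_space \<Rightarrow> ennreal"
  assumes "f \<in> borel_measurable borel"
  shows "(\<integral>\<^sup>+p. f (snd p, fst p) \<partial>lborel) = (\<integral>\<^sup>+p. f p \<partial>lborel)"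
proof -
  have f: "f \<in> borel_measurable (lborel \<Otimes>\<^sub>M lborel)"
    using assms by (simp add: lborel_prod)
  have f_swap: "(\<lambda>p. f (snd p, fst p)) \<in> borel_measurable (lborel \<Otimes>\<^sub>M lborel)"
    using measurable_pair_swap[OF f] by (simp add: case_prod_beta')
  have "(\<integral>\<^sup>+p. f (snd p, fst p) \<partial>(lborel \<Otimes>\<^sub>M lborel)) = (\<integral>\<^sup>+x. \<integral>\<^sup>+y. f (y, x) \<partial>lborel \<partial>lborel)"
    using lborel.nn_integral_fst[OF f_swap] by simp
  also have "\<dots> = (\<integral>\<^sup>+p. f p \<partial>(lborel \<Otimes>\<^sub>M lborel))"
    by (rule lborel_pair.nn_integral_snd[OF f])
  finally show ?thesis by (simp add: lborel_prod)
qed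

lemma measure_density_eq_set_integral:
  fixes g :: "'a \<Rightarrow> real"
  assumes "g \<in> borel_measurable M" "\<And>x. 0 \<le> g x" "A \<in> sets M"
  shows "measure (density M (\<lambda>x. ennreal (g x))) A = (LINT x:A|M. g x)"
proof -
  have "(LINT x:A|M. g x) = enn2real (\<integral>\<^sup>+x. ennreal (indicator A x * g x) \<partial>M)"
    unfolding set_lebesgue_integral_def using assms
    by (simp add: integral_eq_nn_integral)
  also have "(\<integral>\<^sup>+x. ennreal (indicator A x * g x) \<partial>M) = emeasure (density M (\<lambda>x. ennreal (g x))) A"
    using assms by (simp add: emeasure_density) (auto intro: nn_integral_cong split: split_indicator)
  finally show ?thesis by (simp add: measure_def)
qed

lemma measure_eqI_atMost_real_pair:
  fixes M N :: "(real \<times> real) measure"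
  assumes sets: "sets M = sets borel" "sets N = sets borel"
    and finite: "\<And>x. emeasure M {..x} \<noteq> \<infinity>"
    and eq: "\<And>x. emeasure M {..x} = emeasure N {..x}"
  shows "M = N"
proof (rule measure_eqI_generator_eq[where \<Omega>=UNIV and E="range atMost" and A="\<lambda>i. {..(real i, real i)}"])
  show "Int_stable (range (atMost :: real \<times> real \<Rightarrow> _))"
  proof (rule Int_stableI, safe)
    fix x y :: "real \<times> real"
    have "{..x} \<inter> {..y} = {..(min (fst x) (fst y), min (snd x) (snd y))}"
      by (auto simp: less_eq_prod_def)
    then show "{..x} \<inter> {..y} \<in> range atMost" by blast
  qed
  have "sets (borel :: (real \<times> real) measure) = sigma_sets UNIV (range atMost)"
    by (subst borel_eq_atMost) (simp add: sets_measure_of)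
  then show "sets M = sigma_sets UNIV (range atMost)" "sets N = sigma_sets UNIV (range atMost)"
    using sets by simp_all
  show "(\<Union>i. {..(real i, real i)}) = UNIV"
  proof safe
    fix x1 x2 :: real
    obtain n :: nat where "max x1 x2 \<le> real n" using real_arch_simple by blast
    then show "(x1, x2) \<in> (\<Union>i. {..(real i, real i)})" by (auto simp: less_eq_prod_def)
  qed simp
qed (use finite eq in auto)

lemma wedge_borel: "{p::real \<times> real. 0 < fst p \<and> fst p < snd p} \<in> sets borel"
  by (intro borel_open open_Collect_conj open_Collect_less continuous_intros)

locale nonneg_power_series =
  fixes c :: "nat \<Rightarrow> real" and r :: real
  assumes coeff_nonneg: "\<And>n. 0 \<le> c n"
    and radius_pos: "0 < r"
    and summable_at_radius: "summable (\<lambda>n. c n * r ^ n)"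
begin

definition powser :: "nat \<Rightarrow> real \<Rightarrow> real" where
  "powser k z = (\<Sum>n. (diffs ^^ k) c n * z ^ n)"

lemma diffs_iterate_nonneg: "0 \<le> (diffs ^^ k) c n"
  by (induction k arbitrary: n) (simp_all add: coeff_nonneg diffs_def)

lemma summable_powser: "\<bar>z\<bar> < r \<Longrightarrow> summable (\<lambda>n. (diffs ^^ k) c n * z ^ n)"
proof (induction k arbitrary: z)
  case 0
  then show ?case
    using powser_inside[OF summable_at_radius] by simp
next
  case (Suc k)
  then show ?case
    using termdiff_converges[of z r "(diffs ^^ k) c"] by simp
qed

lemma DERIV_powser: "\<bar>z\<bar> < r \<Longrightarrow> (powser k has_real_derivative powser (Suc k) z) (at z)"
  unfolding powser_def[abs_def] funpow.simps o_apply
  by (rule termdiffs_strong'[of r]) (auto intro: summable_powser)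

lemma isCont_powser: "\<bar>z\<bar> < r \<Longrightarrow> isCont (powser k) z"
  using DERIV_powser DERIV_isCont by blast

lemma powser_nonneg: "0 \<le> z \<Longrightarrow> z < r \<Longrightarrow> 0 \<le> powser k z"
  unfolding powser_def
  by (intro suminf_nonneg summable_powser mult_nonneg_nonneg diffs_iterate_nonneg) auto

lemma powser_at_0: "powser k 0 = (diffs ^^ k) c 0"
  using powser_zero[of "(diffs ^^ k) c"] by (simp add: powser_def)

lemma deriv_powser: "\<bar>z\<bar> < r \<Longrightarrow> deriv (powser k) z = powser (Suc k) z"
  using DERIV_powser DERIV_imp_deriv by blast

lemma deriv_deriv_powser: "\<bar>z\<bar> < r \<Longrightarrow> deriv (deriv (powser k)) z = powser (Suc (Suc k)) z"
proof -
  assume z: "\<bar>z\<bar> < r"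
  have "(deriv (powser k) has_real_derivative powser (Suc (Suc k)) z) (at z)"
  proof (rule has_field_derivative_transform_within_open[OF DERIV_powser[OF z]])
    show "open {-r<..<r}" "z \<in> {-r<..<r}" using z by auto
  qed (auto simp: deriv_powser)
  then show ?thesis by (rule DERIV_imp_deriv)
qed

end

lemma F_GE_nonneg: "0 \<le> F_GE y \<beta> lam"
  by (simp add: F_GE_def)

lemma F_GE_less_1:
  assumes "0 < lam" "0 < \<beta>" shows "F_GE y \<beta> lam < 1"
proof (cases "y \<le> 0")
  case False
  then have "0 < 1 - exp (- lam * y)" "1 - exp (- lam * y) < 1"
    using assms by auto
  then have "(1 - exp (- lam * y)) powr \<beta> < 1 powr \<beta>"
    using assms by (intro powr_less_mono2) auto
  then show ?thesis using False by (simp add: F_GE_def)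
qed (simp add: F_GE_def)

lemma f_GE_nonneg: "0 \<le> \<beta> \<Longrightarrow> 0 \<le> lam \<Longrightarrow> 0 \<le> f_GE y \<beta> lam"
  by (simp add: f_GE_def)

lemma F_GE_mult:
  assumes "0 < lam" shows "F_GE y \<beta> lam * F_GE y \<gamma> lam = F_GE y (\<beta> + \<gamma>) lam"
  using assms by (simp add: F_GE_def powr_add)

lemma f_GE_mult_F_GE:
  assumes "0 < lam" "\<beta> + \<gamma> \<noteq> 0"
  shows "f_GE y \<beta> lam * F_GE y \<gamma> lam = \<beta> / (\<beta> + \<gamma>) * f_GE y (\<beta> + \<gamma>) lam"
proof (cases "y \<le> 0")
  case False
  then have "(1 - exp (- lam * y)) powr (\<beta> - 1) * (1 - exp (- lam * y)) powr \<gamma>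
      = (1 - exp (- lam * y)) powr (\<beta> + \<gamma> - 1)"
    using assms by (simp add: powr_add[symmetric] algebra_simps)
  then show ?thesis
    using False assms(2) by (simp add: F_GE_def f_GE_def field_simps)
qed (simp add: F_GE_def f_GE_def)

lemma has_real_derivative_F_GE:
  assumes "0 < lam" "0 < y"
  shows "((\<lambda>y. F_GE y \<beta> lam) has_real_derivative f_GE y \<beta> lam) (at y)"
proof -
  have "0 < 1 - exp (- lam * y)" using assms by simp
  from DERIV_fun_powr[of "\<lambda>y. 1 - exp (- lam * y)" "lam * exp (- lam * y)" y \<beta>, OF _ this]
  have "((\<lambda>y. (1 - exp (- lam * y)) powr \<beta>) has_real_derivative f_GE y \<beta> lam) (at y)"
    using assms by (auto simp: f_GE_def algebra_simps intro!: derivative_eq_intros)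
  then show ?thesis
    by (rule has_field_derivative_transform_within_open[of _ _ _ "{0<..}"])
      (use assms in \<open>auto simp: F_GE_def\<close>)
qed

lemma isCont_F_GE_at:
  assumes "0 < lam" "0 < \<beta>" shows "isCont (\<lambda>y. F_GE y \<beta> lam) y"
proof -
  consider "y < 0" | "y = 0" | "0 < y" by linarith
  then show ?thesis
  proof cases
    case 1
    have "\<forall>\<^sub>F x in nhds y. x \<in> {..<0}"
      using 1 by (intro eventually_nhds_in_open) auto
    then have "\<forall>\<^sub>F x in nhds y. F_GE x \<beta> lam = 0"
      by (rule eventually_mono) (simp add: F_GE_def)
    then show ?thesis by (simp add: isCont_cong)
  next
    case 2
    have "((\<lambda>y. F_GE y \<beta> lam) \<longlongrightarrow> 0) (at_left 0)"
      by (rule tendsto_eventually) (simp add: eventually_at_filter F_GE_def)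
    moreover have "((\<lambda>y. (1 - exp (- lam * y)) powr \<beta>) \<longlongrightarrow> 0) (at_right 0)"
    proof (rule tendsto_zero_powrI)
      show "((\<lambda>y. 1 - exp (- lam * y)) \<longlongrightarrow> 0) (at_right 0)"
        by (rule tendsto_eq_intros refl | simp)+
      show "\<forall>\<^sub>F x in at_right 0. 0 \<le> 1 - exp (- lam * x)"
        using assms by (auto simp: eventually_at_filter)
      show "((\<lambda>y. \<beta>) \<longlongrightarrow> \<beta>) (at_right 0)" by simp
    qed (use assms in auto)
    then have "((\<lambda>y. F_GE y \<beta> lam) \<longlongrightarrow> 0) (at_right 0)"
      by (rule Lim_transform_eventually) (auto simp: eventually_at_filter F_GE_def)
    ultimately show ?thesis
      using 2 by (simp add: isCont_def filterlim_at_split F_GE_def)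
  next
    case 3
    then show ?thesis using has_real_derivative_F_GE[OF assms(1)] DERIV_isCont by blast
  qed
qed

lemma isCont_f_GE_at:
  assumes "0 < lam" "0 < y" shows "isCont (\<lambda>y. f_GE y \<beta> lam) y"
proof -
  have "\<forall>\<^sub>F x in nhds y. x \<in> {0<..}"
    using assms by (intro eventually_nhds_in_open) auto
  then have "\<forall>\<^sub>F x in nhds y.
      f_GE x \<beta> lam = \<beta> * lam * exp (- lam * x) * (1 - exp (- lam * x)) powr (\<beta> - 1)"
    by (rule eventually_mono) (simp add: f_GE_def)
  moreover have "isCont (\<lambda>y. \<beta> * lam * exp (- lam * y) * (1 - exp (- lam * y)) powr (\<beta> - 1)) y"
    using assms by (intro continuous_intros) auto
  ultimately show ?thesis by (simp add: isCont_cong)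
qed

lemma isCont_F_GE [continuous_intros]:
  "0 < lam \<Longrightarrow> 0 < \<beta> \<Longrightarrow> isCont g x \<Longrightarrow> isCont (\<lambda>x. F_GE (g x) \<beta> lam) x"
  using isCont_o2[OF _ isCont_F_GE_at] by blast

lemma isCont_f_GE [continuous_intros]:
  "0 < lam \<Longrightarrow> isCont g x \<Longrightarrow> 0 < g x \<Longrightarrow> isCont (\<lambda>x. f_GE (g x) \<beta> lam) x"
  using isCont_o2[OF _ isCont_f_GE_at] by blast

lemma F_GE_mult_less_1:
  assumes "0 < lam" "0 < \<beta>" "0 < \<gamma>" shows "F_GE s \<beta> lam * F_GE t \<gamma> lam < 1"
  using mult_strict_mono[OF F_GE_less_1[OF assms(1,2)] F_GE_less_1[OF assms(1,3)]]
  by (simp add: F_GE_nonneg)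

locale GE_power_series = nonneg_power_series c \<theta> for c \<theta> +
  fixes lam :: real
  assumes coeff_0: "c 0 = 0"
    and lam_pos: "0 < lam"
begin

abbreviation C :: "real \<Rightarrow> real" where "C \<equiv> powser 0"
abbreviation C' :: "real \<Rightarrow> real" where "C' \<equiv> powser (Suc 0)"
abbreviation C'' :: "real \<Rightarrow> real" where "C'' \<equiv> powser (Suc (Suc 0))"

lemma C_0: "C 0 = 0"
  by (simp add: powser_at_0 coeff_0)

lemma scaled_in_radius: "0 \<le> u \<Longrightarrow> u < 1 \<Longrightarrow> \<bar>\<theta> * u\<bar> < \<theta>"
  using radius_pos by (simp add: abs_mult)

lemma powser_scaled_nonneg: "0 \<le> u \<Longrightarrow> u < 1 \<Longrightarrow> 0 \<le> powser k (\<theta> * u)"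
  using radius_pos by (intro powser_nonneg) simp_all

lemma DERIV_powser_scaled:
  assumes "(g has_real_derivative g') (at x)" "0 \<le> g x" "g x < 1"
  shows "((\<lambda>x. powser k (\<theta> * g x)) has_real_derivative powser (Suc k) (\<theta> * g x) * (\<theta> * g')) (at x)"
  using DERIV_chain'[OF DERIV_cmult[OF assms(1)] DERIV_powser[OF scaled_in_radius[OF assms(2,3)]]]
  by simp

lemma isCont_powser_scaled:
  assumes "isCont g x" "0 \<le> g x" "g x < 1"
  shows "isCont (\<lambda>x. powser k (\<theta> * g x)) x"
proof -
  have "isCont (\<lambda>x. \<theta> * g x) x" using assms(1) by (intro continuous_intros)
  from isCont_o2[OF this isCont_powser[OF scaled_in_radius[OF assms(2,3)]]] show ?thesis .
qed

text \<open>
  \<open>mixed_density \<beta> \<gamma>\<close> and \<open>partial_fst \<beta> \<gamma>\<close> are \<open>\<partial>\<^sub>s \<partial>\<^sub>t\<close> and \<open>\<partial>\<^sub>s\<close> of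
  \<open>C (\<theta> F(s; \<beta>) F(t; \<gamma>))\<close>; \<open>diag_density \<alpha>\<close> is the derivative of \<open>C (\<theta> F(y; \<alpha>))\<close>.
\<close>

definition mixed_density :: "real \<Rightarrow> real \<Rightarrow> real \<Rightarrow> real \<Rightarrow> real" where
  "mixed_density \<beta> \<gamma> s t = (let K = F_GE s \<beta> lam * F_GE t \<gamma> lam in
     \<theta> * f_GE s \<beta> lam * f_GE t \<gamma> lam * (\<theta> * K * C'' (\<theta> * K) + C' (\<theta> * K)))"

definition partial_fst :: "real \<Rightarrow> real \<Rightarrow> real \<Rightarrow> real \<Rightarrow> real" where
  "partial_fst \<beta> \<gamma> s t = \<theta> * f_GE s \<beta> lam * F_GE t \<gamma> lam * C' (\<theta> * (F_GE s \<beta> lam * F_GE t \<gamma> lam))"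

definition diag_density :: "real \<Rightarrow> real \<Rightarrow> real" where
  "diag_density \<alpha> y = \<theta> * f_GE y \<alpha> lam * C' (\<theta> * F_GE y \<alpha> lam)"

lemma DERIV_C_F_GE_fst:
  assumes "0 < \<beta>" "0 < \<gamma>" "0 < s"
  shows "((\<lambda>s. C (\<theta> * (F_GE s \<beta> lam * F_GE t \<gamma> lam))) has_real_derivative partial_fst \<beta> \<gamma> s t) (at s)"
proof -
  have "((\<lambda>s. F_GE s \<beta> lam * F_GE t \<gamma> lam) has_real_derivative f_GE s \<beta> lam * F_GE t \<gamma> lam) (at s)"
    by (rule DERIV_cmult_right[OF has_real_derivative_F_GE[OF lam_pos assms(3)]])
  from DERIV_powser_scaled[OF this _ F_GE_mult_less_1[OF lam_pos assms(1,2)], of 0]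
  show ?thesis by (simp add: partial_fst_def F_GE_nonneg ac_simps)
qed

lemma DERIV_partial_fst_snd:
  assumes "0 < \<beta>" "0 < \<gamma>" "0 < t"
  shows "((\<lambda>t. partial_fst \<beta> \<gamma> s t) has_real_derivative mixed_density \<beta> \<gamma> s t) (at t)"
proof -
  have F: "((\<lambda>t. F_GE s \<beta> lam * F_GE t \<gamma> lam) has_real_derivative F_GE s \<beta> lam * f_GE t \<gamma> lam) (at t)"
    by (rule DERIV_cmult[OF has_real_derivative_F_GE[OF lam_pos assms(3)]])
  have G: "((\<lambda>t. \<theta> * f_GE s \<beta> lam * F_GE t \<gamma> lam) has_real_derivative
      \<theta> * f_GE s \<beta> lam * f_GE t \<gamma> lam) (at t)"
    by (rule DERIV_cmult[OF has_real_derivative_F_GE[OF lam_pos assms(3)]])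
  from DERIV_mult[OF G DERIV_powser_scaled[OF F _ F_GE_mult_less_1[OF lam_pos assms(1,2)], of "Suc 0"]]
  show ?thesis
    unfolding partial_fst_def mixed_density_def Let_def
    by (rule DERIV_cong) (simp_all add: F_GE_nonneg algebra_simps)
qed

lemma DERIV_C_F_GE:
  assumes "0 < \<alpha>" "0 < y"
  shows "((\<lambda>y. C (\<theta> * F_GE y \<alpha> lam)) has_real_derivative diag_density \<alpha> y) (at y)"
  using DERIV_powser_scaled[OF has_real_derivative_F_GE[OF lam_pos assms(2)], of \<alpha> 0]
    F_GE_less_1[OF lam_pos assms(1)]
  by (simp add: diag_density_def F_GE_nonneg ac_simps)

lemma partial_fst_diag:
  assumes "0 < \<beta>" "0 < \<gamma>"
  shows "partial_fst \<beta> \<gamma> s s = \<beta> / (\<beta> + \<gamma>) * diag_density (\<beta> + \<gamma>) s"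
  using f_GE_mult_F_GE[OF lam_pos, of \<beta> \<gamma> s] F_GE_mult[OF lam_pos, of s \<beta> \<gamma>] assms
  by (simp add: partial_fst_def diag_density_def ac_simps)

lemma mixed_density_nonneg:
  assumes "0 < \<beta>" "0 < \<gamma>" shows "0 \<le> mixed_density \<beta> \<gamma> s t"
  using F_GE_mult_less_1[OF lam_pos assms] assms radius_pos lam_pos
  unfolding mixed_density_def Let_def
  by (intro mult_nonneg_nonneg add_nonneg_nonneg powser_scaled_nonneg)
    (simp_all add: F_GE_nonneg f_GE_nonneg)

lemma diag_density_nonneg:
  assumes "0 < \<alpha>" shows "0 \<le> diag_density \<alpha> y"
  using F_GE_less_1[OF lam_pos assms] assms radius_pos lam_pos
  by (auto simp: diag_density_def F_GE_nonneg f_GE_nonneg powser_scaled_nonneg)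

lemma isCont_mixed_density [continuous_intros]:
  assumes "0 < \<beta>" "0 < \<gamma>" "isCont g x" "isCont h x" "0 < g x" "0 < h x"
  shows "isCont (\<lambda>x. mixed_density \<beta> \<gamma> (g x) (h x)) x"
  unfolding mixed_density_def Let_def
  using assms lam_pos F_GE_mult_less_1[OF lam_pos assms(1,2)]
  by (intro continuous_intros isCont_powser_scaled) (simp_all add: F_GE_nonneg)

lemma isCont_diag_density [continuous_intros]:
  assumes "0 < \<alpha>" "isCont g x" "0 < g x"
  shows "isCont (\<lambda>x. diag_density \<alpha> (g x)) x"
  unfolding diag_density_def
  using assms lam_pos F_GE_less_1[OF lam_pos assms(1)]
  by (intro continuous_intros isCont_powser_scaled) (simp_all add: F_GE_nonneg)

lemma nn_integral_mixed_density_snd: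
  assumes "0 < \<beta>" "0 < \<gamma>" "0 < s" "s < x"
  shows "(\<integral>\<^sup>+t. ennreal (mixed_density \<beta> \<gamma> s t) * indicator {s<..<x} t \<partial>lborel)
      = ennreal (partial_fst \<beta> \<gamma> s x - \<beta> / (\<beta> + \<gamma>) * diag_density (\<beta> + \<gamma>) s)"
    and "\<beta> / (\<beta> + \<gamma>) * diag_density (\<beta> + \<gamma>) s \<le> partial_fst \<beta> \<gamma> s x"
proof -
  have deriv: "((\<lambda>t. partial_fst \<beta> \<gamma> s t) has_real_derivative mixed_density \<beta> \<gamma> s t) (at t)"
    if "0 < t" for t
    using DERIV_partial_fst_snd[OF assms(1,2) that] .
  have cont: "isCont (mixed_density \<beta> \<gamma> s) t" if "0 < t" for t
    using assms that by (intro continuous_intros) auto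
  have pcont: "isCont (partial_fst \<beta> \<gamma> s) t" if "0 < t" for t
    using DERIV_isCont[OF deriv[OF that]] .
  have "(\<integral>\<^sup>+t. ennreal (mixed_density \<beta> \<gamma> s t) * indicator {s<..<x} t \<partial>lborel)
      = ennreal (partial_fst \<beta> \<gamma> s x - partial_fst \<beta> \<gamma> s s)"
    and "partial_fst \<beta> \<gamma> s s \<le> partial_fst \<beta> \<gamma> s x"
    using nn_integral_FTC_open_interval[OF \<open>s < x\<close> deriv cont mixed_density_nonneg[OF assms(1,2)]
        pcont pcont] assms by auto
  then show "(\<integral>\<^sup>+t. ennreal (mixed_density \<beta> \<gamma> s t) * indicator {s<..<x} t \<partial>lborel)
      = ennreal (partial_fst \<beta> \<gamma> s x - \<beta> / (\<beta> + \<gamma>) * diag_density (\<beta> + \<gamma>) s)"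
    and "\<beta> / (\<beta> + \<gamma>) * diag_density (\<beta> + \<gamma>) s \<le> partial_fst \<beta> \<gamma> s x"
    by (simp_all add: partial_fst_diag[OF assms(1,2)])
qed

lemma nn_integral_diag_density:
  assumes "0 < \<alpha>"
  shows "(\<integral>\<^sup>+y. ennreal (diag_density \<alpha> y) * indicator {0<..x} y \<partial>lborel) = ennreal (C (\<theta> * F_GE x \<alpha> lam))"
proof (cases "0 < x")
  case True
  have "(\<integral>\<^sup>+y. ennreal (diag_density \<alpha> y) * indicator {0<..x} y \<partial>lborel)
      = (\<integral>\<^sup>+y. ennreal (diag_density \<alpha> y) * indicator {0<..<x} y \<partial>lborel)"
    by (intro nn_integral_cong_AE eventually_mono[OF AE_lborel_singleton[of x]])
      (auto split: split_indicator)
  also have "\<dots> = ennreal (C (\<theta> * F_GE x \<alpha> lam) - C (\<theta> * F_GE 0 \<alpha> lam))"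
  proof (rule nn_integral_FTC_open_interval)
    have C_cont: "isCont (\<lambda>y. C (\<theta> * F_GE y \<alpha> lam)) y" for y
      using F_GE_less_1[OF lam_pos assms] assms lam_pos
      by (intro isCont_powser_scaled continuous_intros) (simp_all add: F_GE_nonneg)
    show "isCont (\<lambda>y. C (\<theta> * F_GE y \<alpha> lam)) 0" "isCont (\<lambda>y. C (\<theta> * F_GE y \<alpha> lam)) x"
      by (rule C_cont)+
    show "((\<lambda>y. C (\<theta> * F_GE y \<alpha> lam)) has_real_derivative diag_density \<alpha> y) (at y)" if "0 < y" for y
      using DERIV_C_F_GE[OF assms that] .
    show "isCont (diag_density \<alpha>) y" if "0 < y" for y
      using assms that by (intro continuous_intros)
  qed (use True diag_density_nonneg[OF assms] in auto)
  finally show ?thesis by (simp add: F_GE_def C_0)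
qed (simp add: F_GE_def C_0 indicator_def)

lemma borel_measurable_mixed_density:
  assumes "0 < \<beta>" "0 < \<gamma>" "S \<in> sets borel" "S \<subseteq> {0<..} \<times> {0<..}"
  shows "(\<lambda>p. indicator S p * mixed_density \<beta> \<gamma> (fst p) (snd p)) \<in> borel_measurable borel"
proof (rule borel_measurable_indicator_continuous_on[OF assms(3,4)])
  show "continuous_on ({0<..} \<times> {0<..}) (\<lambda>p. mixed_density \<beta> \<gamma> (fst p) (snd p))"
    using assms(1,2)
    by (intro continuous_at_imp_continuous_on ballI continuous_intros) (auto simp: open_Times)
qed

lemma borel_measurable_diag_density:
  assumes "0 < \<alpha>" "S \<in> sets borel" "S \<subseteq> {0<..}"
  shows "(\<lambda>y. indicator S y * diag_density \<alpha> y) \<in> borel_measurable borel"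
proof (rule borel_measurable_indicator_continuous_on[OF assms(2,3)])
  show "continuous_on {0<..} (diag_density \<alpha>)"
    using assms(1) by (intro continuous_at_imp_continuous_on ballI continuous_intros) auto
qed

lemma borel_measurable_mixed_density_triangle:
  assumes "0 < \<beta>" "0 < \<gamma>"
  shows "(\<lambda>p. ennreal (mixed_density \<beta> \<gamma> (fst p) (snd p))
      * indicator ({p. 0 < fst p \<and> fst p < snd p} \<inter> {..(x1, x2)}) p) \<in> borel_measurable borel"
proof -
  have "{p::real \<times> real. 0 < fst p \<and> fst p < snd p} \<inter> {..(x1, x2)} \<in> sets borel"
    using wedge_borel by simp
  moreover have "{p::real \<times> real. 0 < fst p \<and> fst p < snd p} \<inter> {..(x1, x2)} \<subseteq> {0<..} \<times> {0<..}"
    by auto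
  ultimately have "(\<lambda>p. ennreal (indicator ({p. 0 < fst p \<and> fst p < snd p} \<inter> {..(x1, x2)}) p
      * mixed_density \<beta> \<gamma> (fst p) (snd p))) \<in> borel_measurable borel"
    by (intro measurable_compose[OF _ measurable_ennreal] borel_measurable_mixed_density assms)
  also have "(\<lambda>p. ennreal (indicator ({p. 0 < fst p \<and> fst p < snd p} \<inter> {..(x1, x2)}) p
      * mixed_density \<beta> \<gamma> (fst p) (snd p)))
    = (\<lambda>p. ennreal (mixed_density \<beta> \<gamma> (fst p) (snd p))
      * indicator ({p. 0 < fst p \<and> fst p < snd p} \<inter> {..(x1, x2)}) p)"
    by (simp add: fun_eq_iff split: split_indicator)
  finally show ?thesis .
qed

lemma nn_integral_mixed_density_triangle:
  fixes x1 x2 :: real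
  assumes "0 < \<beta>" "0 < \<gamma>"
  defines "m \<equiv> min x1 x2"
  shows "(\<integral>\<^sup>+p. ennreal (mixed_density \<beta> \<gamma> (fst p) (snd p))
            * indicator ({p. 0 < fst p \<and> fst p < snd p} \<inter> {..(x1, x2)}) p \<partial>lborel)
      = ennreal (C (\<theta> * (F_GE m \<beta> lam * F_GE x2 \<gamma> lam)) - \<beta> / (\<beta> + \<gamma>) * C (\<theta> * F_GE m (\<beta> + \<gamma>) lam))"
    and "\<beta> / (\<beta> + \<gamma>) * C (\<theta> * F_GE m (\<beta> + \<gamma>) lam) \<le> C (\<theta> * (F_GE m \<beta> lam * F_GE x2 \<gamma> lam))"
proof -
  define T where "T = {p::real \<times> real. 0 < fst p \<and> fst p < snd p} \<inter> {..(x1, x2)}"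
  define \<Psi> where "\<Psi> s = C (\<theta> * (F_GE s \<beta> lam * F_GE x2 \<gamma> lam)) - \<beta> / (\<beta> + \<gamma>) * C (\<theta> * F_GE s (\<beta> + \<gamma>) lam)"
    for s
  define \<psi> where "\<psi> s = partial_fst \<beta> \<gamma> s x2 - \<beta> / (\<beta> + \<gamma>) * diag_density (\<beta> + \<gamma>) s" for s
  have T_mem: "(s, t) \<in> T \<longleftrightarrow> 0 < s \<and> s < t \<and> s \<le> x1 \<and> t \<le> x2" for s t
    by (simp add: T_def)
  have inner: "(\<integral>\<^sup>+t. ennreal (mixed_density \<beta> \<gamma> s t) * indicator T (s, t) \<partial>lborel)
      = ennreal (\<psi> s) * indicator {0<..<m} s" if "s \<noteq> m" for s
  proof (cases "0 < s \<and> s < m")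
    case True
    have "(\<integral>\<^sup>+t. ennreal (mixed_density \<beta> \<gamma> s t) * indicator T (s, t) \<partial>lborel)
        = (\<integral>\<^sup>+t. ennreal (mixed_density \<beta> \<gamma> s t) * indicator {s<..<x2} t \<partial>lborel)"
      using True by (intro nn_integral_cong_AE eventually_mono[OF AE_lborel_singleton[of x2]])
        (auto simp: T_mem m_def split: split_indicator)
    then show ?thesis
      using True nn_integral_mixed_density_snd(1)[OF assms(1,2), of s x2] by (simp add: \<psi>_def m_def)
  next
    case False
    then have "indicator T (s, t) = (0::ennreal)" for t
      using that by (auto simp: T_mem m_def indicator_def)
    then show ?thesis
      using False by simp
  qed
  have "(\<lambda>p. ennreal (mixed_density \<beta> \<gamma> (fst p) (snd p)) * indicator T p) \<in> borel_measurable borel"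
    unfolding T_def by (rule borel_measurable_mixed_density_triangle[OF assms(1,2)])
  then have "(\<integral>\<^sup>+p. ennreal (mixed_density \<beta> \<gamma> (fst p) (snd p)) * indicator T p \<partial>lborel)
      = (\<integral>\<^sup>+s. \<integral>\<^sup>+t. ennreal (mixed_density \<beta> \<gamma> s t) * indicator T (s, t) \<partial>lborel \<partial>lborel)"
    by (subst nn_integral_lborel_fst) simp_all
  also have "\<dots> = (\<integral>\<^sup>+s. ennreal (\<psi> s) * indicator {0<..<m} s \<partial>lborel)"
    by (intro nn_integral_cong_AE eventually_mono[OF AE_lborel_singleton[of m]] inner) simp
  finally have double: "(\<integral>\<^sup>+p. ennreal (mixed_density \<beta> \<gamma> (fst p) (snd p)) * indicator T p \<partial>lborel)
      = (\<integral>\<^sup>+s. ennreal (\<psi> s) * indicator {0<..<m} s \<partial>lborel)" .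
  have "(\<integral>\<^sup>+s. ennreal (\<psi> s) * indicator {0<..<m} s \<partial>lborel) = ennreal (\<Psi> m) \<and> 0 \<le> \<Psi> m"
  proof (cases "0 < m")
    case True
    have \<Psi>_cont: "isCont \<Psi> s" for s
      unfolding \<Psi>_def
      using lam_pos assms(1,2) F_GE_mult_less_1[OF lam_pos assms(1,2)] F_GE_less_1[of lam "\<beta> + \<gamma>"]
      by (intro isCont_powser_scaled continuous_intros) (simp_all add: F_GE_nonneg)
    have \<Psi>_deriv: "(\<Psi> has_real_derivative \<psi> s) (at s)" if "0 < s" for s
      unfolding \<Psi>_def[abs_def] \<psi>_def
      using assms that by (intro DERIV_diff DERIV_cmult DERIV_C_F_GE_fst DERIV_C_F_GE) simp_all
    have \<psi>_cont: "isCont \<psi> s" if "0 < s" for s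
      unfolding \<psi>_def[abs_def] partial_fst_def
      using that lam_pos assms(1,2) F_GE_mult_less_1[OF lam_pos assms(1,2)]
      by (intro isCont_powser_scaled continuous_intros) (simp_all add: F_GE_nonneg)
    have \<psi>_nonneg: "0 \<le> \<psi> s" if "0 < s" "s < m" for s
      using nn_integral_mixed_density_snd(2)[OF assms(1,2), of s x2] that by (simp add: \<psi>_def m_def)
    from nn_integral_FTC_open_interval[OF True \<Psi>_deriv \<psi>_cont \<psi>_nonneg \<Psi>_cont \<Psi>_cont]
    show ?thesis by (simp add: \<Psi>_def F_GE_def C_0)
  qed (simp add: \<Psi>_def F_GE_def C_0 indicator_def)
  then show "(\<integral>\<^sup>+p. ennreal (mixed_density \<beta> \<gamma> (fst p) (snd p))
            * indicator ({p. 0 < fst p \<and> fst p < snd p} \<inter> {..(x1, x2)}) p \<partial>lborel)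
      = ennreal (C (\<theta> * (F_GE m \<beta> lam * F_GE x2 \<gamma> lam)) - \<beta> / (\<beta> + \<gamma>) * C (\<theta> * F_GE m (\<beta> + \<gamma>) lam))"
    and "\<beta> / (\<beta> + \<gamma>) * C (\<theta> * F_GE m (\<beta> + \<gamma>) lam) \<le> C (\<theta> * (F_GE m \<beta> lam * F_GE x2 \<gamma> lam))"
    using double by (simp_all add: T_def \<Psi>_def)
qed

end

locale BGEPS_model = GE_power_series "\<lambda>n. if n = 0 then 0 else a n" \<theta> lam for a \<theta> lam +
  fixes \<alpha>1 \<alpha>2 \<alpha>3 :: real
  assumes shape_pos: "0 < \<alpha>1" "0 < \<alpha>2" "0 < \<alpha>3"
    and PS_C_pos: "0 < PS_C a \<theta>"
begin

lemma PS_C_eq_C: "PS_C a = C"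
proof
  fix t
  have "(\<lambda>n. a (Suc n) * t ^ Suc n) sums x \<longleftrightarrow> (\<lambda>n. (if n = 0 then 0 else a n) * t ^ n) sums x" for x
    using sums_Suc_iff[of "\<lambda>n. (if n = 0 then 0 else a n) * t ^ n"] by simp
  then show "PS_C a t = C t"
    by (simp add: PS_C_def powser_def suminf_def)
qed

definition dens_upper :: "real \<times> real \<Rightarrow> real" where
  "dens_upper p = indicator {p. 0 < fst p \<and> fst p < snd p} p
     * mixed_density (\<alpha>1 + \<alpha>3) \<alpha>2 (fst p) (snd p) / C \<theta>"

definition dens_lower :: "real \<times> real \<Rightarrow> real" where
  "dens_lower p = indicator {p. 0 < snd p \<and> snd p < fst p} p
     * mixed_density (\<alpha>2 + \<alpha>3) \<alpha>1 (snd p) (fst p) / C \<theta>"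

definition dens_diag :: "real \<Rightarrow> real" where
  "dens_diag y = indicator {0<..} y * diag_density (\<alpha>1 + \<alpha>2 + \<alpha>3) y
     * \<alpha>3 / ((\<alpha>1 + \<alpha>2 + \<alpha>3) * C \<theta>)"

definition BGEPS_measure :: "(real \<times> real) measure" where
  "BGEPS_measure = sum_measure
     (sum_measure (density lborel (\<lambda>p. ennreal (dens_upper p))) (density lborel (\<lambda>p. ennreal (dens_lower p))))
     (distr (density lborel (\<lambda>y. ennreal (dens_diag y))) borel (\<lambda>y. (y, y)))"

lemma C_theta_pos: "0 < C \<theta>"
  using PS_C_pos by (simp add: PS_C_eq_C)

lemma dens_upper_nonneg: "0 \<le> dens_upper p"
  using shape_pos C_theta_pos by (simp add: dens_upper_def mixed_density_nonneg)

lemma dens_lower_nonneg: "0 \<le> dens_lower p"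
  using shape_pos C_theta_pos by (simp add: dens_lower_def mixed_density_nonneg)

lemma dens_diag_nonneg: "0 \<le> dens_diag y"
  using shape_pos C_theta_pos by (simp add: dens_diag_def diag_density_nonneg)

lemma dens_upper_measurable [measurable]: "dens_upper \<in> borel_measurable borel"
proof -
  have "(\<lambda>p. indicator {p. 0 < fst p \<and> fst p < snd p} p * mixed_density (\<alpha>1 + \<alpha>3) \<alpha>2 (fst p) (snd p))
      \<in> borel_measurable borel"
    using shape_pos by (intro borel_measurable_mixed_density wedge_borel) auto
  then show ?thesis unfolding dens_upper_def[abs_def] by (rule borel_measurable_divide) simp
qed

lemma dens_lower_measurable [measurable]: "dens_lower \<in> borel_measurable borel"
proof -
  have "(\<lambda>p. indicator {p. 0 < fst p \<and> fst p < snd p} p * mixed_density (\<alpha>2 + \<alpha>3) \<alpha>1 (fst p) (snd p))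
      \<in> borel_measurable borel" (is "?g \<in> _")
    using shape_pos by (intro borel_measurable_mixed_density wedge_borel) auto
  moreover have "(\<lambda>p::real \<times> real. (snd p, fst p)) \<in> borel_measurable borel"
    by (intro borel_measurable_continuous_onI continuous_intros)
  ultimately have "(\<lambda>p. ?g (snd p, fst p)) \<in> borel_measurable borel"
    by (rule measurable_compose[rotated])
  moreover have "dens_lower = (\<lambda>p. ?g (snd p, fst p) / C \<theta>)"
    by (simp add: dens_lower_def fun_eq_iff indicator_def)
  ultimately show ?thesis by simp
qed

lemma dens_diag_measurable [measurable]: "dens_diag \<in> borel_measurable borel"
proof -
  have "(\<lambda>y. indicator {0<..} y * diag_density (\<alpha>1 + \<alpha>2 + \<alpha>3) y) \<in> borel_measurable borel"
    using shape_pos by (intro borel_measurable_diag_density) auto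
  then show ?thesis unfolding dens_diag_def[abs_def]
    by (rule borel_measurable_divide[OF borel_measurable_times[OF _ measurable_const] measurable_const]) simp_all
qed

lemma emeasure_upper_atMost:
  fixes x1 x2 :: real
  defines "m \<equiv> min x1 x2"
  shows "emeasure (density lborel (\<lambda>p. ennreal (dens_upper p))) {..(x1, x2)}
      = ennreal ((C (\<theta> * (F_GE m (\<alpha>1 + \<alpha>3) lam * F_GE x2 \<alpha>2 lam))
          - (\<alpha>1 + \<alpha>3) / (\<alpha>1 + \<alpha>2 + \<alpha>3) * C (\<theta> * F_GE m (\<alpha>1 + \<alpha>2 + \<alpha>3) lam)) / C \<theta>)"
    and "(\<alpha>1 + \<alpha>3) / (\<alpha>1 + \<alpha>2 + \<alpha>3) * C (\<theta> * F_GE m (\<alpha>1 + \<alpha>2 + \<alpha>3) lam)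
      \<le> C (\<theta> * (F_GE m (\<alpha>1 + \<alpha>3) lam * F_GE x2 \<alpha>2 lam))"
proof -
  have sum: "\<alpha>1 + \<alpha>3 + \<alpha>2 = \<alpha>1 + \<alpha>2 + \<alpha>3" by simp
  note triangle = nn_integral_mixed_density_triangle[of "\<alpha>1 + \<alpha>3" \<alpha>2 x1 x2,
      unfolded sum, folded m_def]
  note meas = borel_measurable_mixed_density_triangle[of "\<alpha>1 + \<alpha>3" \<alpha>2 x1 x2]
  show le: "(\<alpha>1 + \<alpha>3) / (\<alpha>1 + \<alpha>2 + \<alpha>3) * C (\<theta> * F_GE m (\<alpha>1 + \<alpha>2 + \<alpha>3) lam)
      \<le> C (\<theta> * (F_GE m (\<alpha>1 + \<alpha>3) lam * F_GE x2 \<alpha>2 lam))"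
    using triangle(2) shape_pos by simp
  have "ennreal (dens_upper p) * indicator {..(x1, x2)} p = ennreal (mixed_density (\<alpha>1 + \<alpha>3) \<alpha>2 (fst p) (snd p))
      * indicator ({p. 0 < fst p \<and> fst p < snd p} \<inter> {..(x1, x2)}) p / ennreal (C \<theta>)" for p
    using C_theta_pos shape_pos
    by (simp add: dens_upper_def divide_ennreal mixed_density_nonneg split: split_indicator)
  then have "emeasure (density lborel (\<lambda>p. ennreal (dens_upper p))) {..(x1, x2)}
      = (\<integral>\<^sup>+p. ennreal (mixed_density (\<alpha>1 + \<alpha>3) \<alpha>2 (fst p) (snd p))
          * indicator ({p. 0 < fst p \<and> fst p < snd p} \<inter> {..(x1, x2)}) p \<partial>lborel) / ennreal (C \<theta>)"
    using meas shape_pos by (simp add: emeasure_density nn_integral_divide)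
  also have "\<dots> = ennreal ((C (\<theta> * (F_GE m (\<alpha>1 + \<alpha>3) lam * F_GE x2 \<alpha>2 lam))
          - (\<alpha>1 + \<alpha>3) / (\<alpha>1 + \<alpha>2 + \<alpha>3) * C (\<theta> * F_GE m (\<alpha>1 + \<alpha>2 + \<alpha>3) lam)) / C \<theta>)"
    using triangle(1) shape_pos le C_theta_pos by (simp add: divide_ennreal)
  finally show "emeasure (density lborel (\<lambda>p. ennreal (dens_upper p))) {..(x1, x2)}
      = ennreal ((C (\<theta> * (F_GE m (\<alpha>1 + \<alpha>3) lam * F_GE x2 \<alpha>2 lam))
          - (\<alpha>1 + \<alpha>3) / (\<alpha>1 + \<alpha>2 + \<alpha>3) * C (\<theta> * F_GE m (\<alpha>1 + \<alpha>2 + \<alpha>3) lam)) / C \<theta>)" .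
qed

lemma emeasure_lower_atMost:
  fixes x1 x2 :: real
  defines "m \<equiv> min x1 x2"
  shows "emeasure (density lborel (\<lambda>p. ennreal (dens_lower p))) {..(x1, x2)}
      = ennreal ((C (\<theta> * (F_GE m (\<alpha>2 + \<alpha>3) lam * F_GE x1 \<alpha>1 lam))
          - (\<alpha>2 + \<alpha>3) / (\<alpha>1 + \<alpha>2 + \<alpha>3) * C (\<theta> * F_GE m (\<alpha>1 + \<alpha>2 + \<alpha>3) lam)) / C \<theta>)"
    and "(\<alpha>2 + \<alpha>3) / (\<alpha>1 + \<alpha>2 + \<alpha>3) * C (\<theta> * F_GE m (\<alpha>1 + \<alpha>2 + \<alpha>3) lam)
      \<le> C (\<theta> * (F_GE m (\<alpha>2 + \<alpha>3) lam * F_GE x1 \<alpha>1 lam))"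
proof -
  have sum: "\<alpha>2 + \<alpha>3 + \<alpha>1 = \<alpha>1 + \<alpha>2 + \<alpha>3" and m: "min x2 x1 = m"
    by (simp_all add: m_def)
  note triangle = nn_integral_mixed_density_triangle[of "\<alpha>2 + \<alpha>3" \<alpha>1 x2 x1, unfolded sum m]
  define g where "g q = ennreal (mixed_density (\<alpha>2 + \<alpha>3) \<alpha>1 (fst q) (snd q))
      * indicator ({q. 0 < fst q \<and> fst q < snd q} \<inter> {..(x2, x1)}) q / ennreal (C \<theta>)" for q
  have g_meas: "g \<in> borel_measurable borel"
    unfolding g_def[abs_def] using shape_pos
    by (intro borel_measurable_divide_ennreal measurable_const borel_measurable_mixed_density_triangle)
      simp_all
  show le: "(\<alpha>2 + \<alpha>3) / (\<alpha>1 + \<alpha>2 + \<alpha>3) * C (\<theta> * F_GE m (\<alpha>1 + \<alpha>2 + \<alpha>3) lam)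
      \<le> C (\<theta> * (F_GE m (\<alpha>2 + \<alpha>3) lam * F_GE x1 \<alpha>1 lam))"
    using triangle(2) shape_pos by simp
  have "ennreal (dens_lower p) * indicator {..(x1, x2)} p = g (snd p, fst p)" for p
    using C_theta_pos shape_pos
    by (auto simp: g_def dens_lower_def divide_ennreal mixed_density_nonneg less_eq_prod_def
        split: split_indicator)
  then have "emeasure (density lborel (\<lambda>p. ennreal (dens_lower p))) {..(x1, x2)} = (\<integral>\<^sup>+p. g p \<partial>lborel)"
    by (simp add: emeasure_density nn_integral_lborel_swap[OF g_meas])
  also have "\<dots> = ennreal ((C (\<theta> * (F_GE m (\<alpha>2 + \<alpha>3) lam * F_GE x1 \<alpha>1 lam))
          - (\<alpha>2 + \<alpha>3) / (\<alpha>1 + \<alpha>2 + \<alpha>3) * C (\<theta> * F_GE m (\<alpha>1 + \<alpha>2 + \<alpha>3) lam)) / C \<theta>)"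
    unfolding g_def using triangle(1) shape_pos le C_theta_pos
    by (simp add: nn_integral_divide borel_measurable_mixed_density_triangle divide_ennreal)
  finally show "emeasure (density lborel (\<lambda>p. ennreal (dens_lower p))) {..(x1, x2)}
      = ennreal ((C (\<theta> * (F_GE m (\<alpha>2 + \<alpha>3) lam * F_GE x1 \<alpha>1 lam))
          - (\<alpha>2 + \<alpha>3) / (\<alpha>1 + \<alpha>2 + \<alpha>3) * C (\<theta> * F_GE m (\<alpha>1 + \<alpha>2 + \<alpha>3) lam)) / C \<theta>)" .
qed

lemma emeasure_diag_atMost:
  fixes x1 x2 :: real
  shows "emeasure (distr (density lborel (\<lambda>y. ennreal (dens_diag y))) borel (\<lambda>y. (y, y))) {..(x1, x2)}
      = ennreal (\<alpha>3 / (\<alpha>1 + \<alpha>2 + \<alpha>3) * C (\<theta> * F_GE (min x1 x2) (\<alpha>1 + \<alpha>2 + \<alpha>3) lam) / C \<theta>)"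
proof -
  have diag_meas: "(\<lambda>y::real. (y, y)) \<in> borel_measurable borel"
    by (intro borel_measurable_continuous_onI continuous_intros)
  have "(\<lambda>y. (y, y)) -` {..(x1, x2)} = {..min x1 x2}"
    by (auto simp: less_eq_prod_def)
  then have "emeasure (distr (density lborel (\<lambda>y. ennreal (dens_diag y))) borel (\<lambda>y. (y, y))) {..(x1, x2)}
      = (\<integral>\<^sup>+y. ennreal (dens_diag y) * indicator {..min x1 x2} y \<partial>lborel)"
    using diag_meas by (simp add: emeasure_distr emeasure_density)
  also have "\<dots> = (\<integral>\<^sup>+y. ennreal (diag_density (\<alpha>1 + \<alpha>2 + \<alpha>3) y) * indicator {0<..min x1 x2} y
      * ennreal (\<alpha>3 / ((\<alpha>1 + \<alpha>2 + \<alpha>3) * C \<theta>)) \<partial>lborel)"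
    using shape_pos C_theta_pos
    by (intro nn_integral_cong)
      (auto simp: dens_diag_def ennreal_mult''[symmetric] split: split_indicator)
  also have "\<dots> = ennreal (\<alpha>3 / (\<alpha>1 + \<alpha>2 + \<alpha>3) * C (\<theta> * F_GE (min x1 x2) (\<alpha>1 + \<alpha>2 + \<alpha>3) lam) / C \<theta>)"
  proof -
    have "(\<lambda>y. ennreal (indicator {0<..min x1 x2} y * diag_density (\<alpha>1 + \<alpha>2 + \<alpha>3) y))
        \<in> borel_measurable borel"
      using shape_pos by (intro measurable_compose[OF _ measurable_ennreal] borel_measurable_diag_density) auto
    then have "(\<lambda>y. ennreal (diag_density (\<alpha>1 + \<alpha>2 + \<alpha>3) y) * indicator {0<..min x1 x2} y)
        \<in> borel_measurable borel"
      by (simp add: indicator_mult_ennreal mult.commute)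
    then show ?thesis
      using nn_integral_diag_density[of "\<alpha>1 + \<alpha>2 + \<alpha>3" "min x1 x2"] shape_pos C_theta_pos
        powser_scaled_nonneg[OF F_GE_nonneg F_GE_less_1[OF lam_pos], of "\<alpha>1 + \<alpha>2 + \<alpha>3" 0]
      by (simp add: nn_integral_multc ennreal_mult''[symmetric])
  qed
  finally show ?thesis .
qed

lemma sets_BGEPS_measure [simp]: "sets BGEPS_measure = sets borel"
  by (simp add: BGEPS_measure_def)

lemma emeasure_BGEPS_measure:
  assumes "A \<in> sets borel"
  shows "emeasure BGEPS_measure A = emeasure (density lborel (\<lambda>p. ennreal (dens_upper p))) A
    + emeasure (density lborel (\<lambda>p. ennreal (dens_lower p))) A
    + emeasure (distr (density lborel (\<lambda>y. ennreal (dens_diag y))) borel (\<lambda>y. (y, y))) A"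
  using assms by (simp add: BGEPS_measure_def emeasure_sum_measure)

lemma shape_weights:
  "(\<alpha>1 + \<alpha>3) / (\<alpha>1 + \<alpha>2 + \<alpha>3) + (\<alpha>2 + \<alpha>3) / (\<alpha>1 + \<alpha>2 + \<alpha>3)
     = 1 + \<alpha>3 / (\<alpha>1 + \<alpha>2 + \<alpha>3)"
  unfolding add_divide_distrib[symmetric] using shape_pos by (simp add: field_simps)

lemma emeasure_BGEPS_measure_atMost:
  "emeasure BGEPS_measure {..(x1, x2)} = ennreal (BGEPS_cdf a \<alpha>1 \<alpha>2 \<alpha>3 lam \<theta> x1 x2)"
proof -
  define m where "m = min x1 x2"
  define G where "G = C (\<theta> * F_GE m (\<alpha>1 + \<alpha>2 + \<alpha>3) lam)"
  define U where "U = C (\<theta> * (F_GE m (\<alpha>1 + \<alpha>3) lam * F_GE x2 \<alpha>2 lam))"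
  define L where "L = C (\<theta> * (F_GE m (\<alpha>2 + \<alpha>3) lam * F_GE x1 \<alpha>1 lam))"
  define w1 w2 w3 where "w1 = (\<alpha>1 + \<alpha>3) / (\<alpha>1 + \<alpha>2 + \<alpha>3)"
    and "w2 = (\<alpha>2 + \<alpha>3) / (\<alpha>1 + \<alpha>2 + \<alpha>3)" and "w3 = \<alpha>3 / (\<alpha>1 + \<alpha>2 + \<alpha>3)"
  note upper = emeasure_upper_atMost[of x1 x2, folded m_def, folded U_def G_def w1_def]
  note lower = emeasure_lower_atMost[of x1 x2, folded m_def, folded L_def G_def w2_def]
  have "0 \<le> G"
    unfolding G_def using shape_pos
    by (intro powser_scaled_nonneg F_GE_nonneg F_GE_less_1 lam_pos) simp
  then have "0 \<le> w3 * G / C \<theta>"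
    using shape_pos C_theta_pos by (simp add: w3_def)
  then have "emeasure BGEPS_measure {..(x1, x2)} = ennreal ((U - w1 * G) / C \<theta> + (L - w2 * G) / C \<theta> + w3 * G / C \<theta>)"
    using upper lower emeasure_diag_atMost[of x1 x2, folded m_def, folded G_def w3_def] C_theta_pos
    by (simp add: emeasure_BGEPS_measure ennreal_plus)
  also have "(U - w1 * G) / C \<theta> + (L - w2 * G) / C \<theta> + w3 * G / C \<theta> = (U + L - (w1 + w2 - w3) * G) / C \<theta>"
    by (simp add: add_divide_distrib[symmetric] diff_divide_distrib[symmetric] algebra_simps)
  also have "w1 + w2 - w3 = 1"
    using shape_weights by (simp add: w1_def w2_def w3_def)
  also have "(U + L - 1 * G) / C \<theta> = BGEPS_cdf a \<alpha>1 \<alpha>2 \<alpha>3 lam \<theta> x1 x2"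
  proof (cases "x1 \<le> x2")
    case True
    then have "L = G"
      using F_GE_mult[OF lam_pos, of x1 "\<alpha>2 + \<alpha>3" \<alpha>1] by (simp add: L_def G_def m_def add_ac)
    then show ?thesis
      using True by (simp add: BGEPS_cdf_def PS_C_eq_C U_def m_def mult.assoc)
  next
    case False
    then have "U = G"
      using F_GE_mult[OF lam_pos, of x2 "\<alpha>1 + \<alpha>3" \<alpha>2] by (simp add: U_def G_def m_def add_ac)
    then show ?thesis
      using False by (simp add: BGEPS_cdf_def PS_C_eq_C L_def m_def ac_simps)
  qed
  finally show ?thesis .
qed

lemma distr_eq_BGEPS_measure:
  assumes "prob_space M" and Y: "Y \<in> borel_measurable M"
    and cdf: "\<And>y1 y2. measure M {\<omega> \<in> space M. fst (Y \<omega>) \<le> y1 \<and> snd (Y \<omega>) \<le> y2}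
      = BGEPS_cdf a \<alpha>1 \<alpha>2 \<alpha>3 lam \<theta> y1 y2"
  shows "distr M borel Y = BGEPS_measure"
proof (rule measure_eqI_atMost_real_pair)
  interpret prob_space M by fact
  fix x :: "real \<times> real"
  show "emeasure (distr M borel Y) {..x} \<noteq> \<infinity>"
    using Y by (simp add: emeasure_distr emeasure_eq_measure)
  have "Y -` {..x} \<inter> space M = {\<omega> \<in> space M. fst (Y \<omega>) \<le> fst x \<and> snd (Y \<omega>) \<le> snd x}"
    by (auto simp: less_eq_prod_def)
  then show "emeasure (distr M borel Y) {..x} = emeasure BGEPS_measure {..x}"
    using Y cdf emeasure_BGEPS_measure_atMost[of "fst x" "snd x"]
    by (simp add: emeasure_distr emeasure_eq_measure)
qed simp_all

lemma BGEPS_f1_eq: "BGEPS_f1 a \<alpha>1 \<alpha>2 \<alpha>3 lam \<theta> y1 y2 = mixed_density (\<alpha>1 + \<alpha>3) \<alpha>2 y1 y2 / C \<theta>"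
proof -
  have "\<bar>\<theta> * (F_GE y1 (\<alpha>1 + \<alpha>3) lam * F_GE y2 \<alpha>2 lam)\<bar> < \<theta>"
    using shape_pos by (intro scaled_in_radius F_GE_mult_less_1 lam_pos) (simp_all add: F_GE_nonneg)
  then show ?thesis
    by (simp add: BGEPS_f1_def mixed_density_def Let_def PS_C_eq_C deriv_powser deriv_deriv_powser)
qed

lemma BGEPS_f2_eq: "BGEPS_f2 a \<alpha>1 \<alpha>2 \<alpha>3 lam \<theta> y1 y2 = mixed_density (\<alpha>2 + \<alpha>3) \<alpha>1 y2 y1 / C \<theta>"
proof -
  have "\<bar>\<theta> * (F_GE y2 (\<alpha>2 + \<alpha>3) lam * F_GE y1 \<alpha>1 lam)\<bar> < \<theta>"
    using shape_pos by (intro scaled_in_radius F_GE_mult_less_1 lam_pos) (simp_all add: F_GE_nonneg)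
  then show ?thesis
    by (simp add: BGEPS_f2_def mixed_density_def Let_def PS_C_eq_C deriv_powser deriv_deriv_powser
        ac_simps)
qed

lemma BGEPS_f0_eq:
  "BGEPS_f0 a \<alpha>1 \<alpha>2 \<alpha>3 lam \<theta> y = diag_density (\<alpha>1 + \<alpha>2 + \<alpha>3) y * \<alpha>3 / ((\<alpha>1 + \<alpha>2 + \<alpha>3) * C \<theta>)"
proof -
  have "\<bar>\<theta> * F_GE y (\<alpha>1 + \<alpha>2 + \<alpha>3) lam\<bar> < \<theta>"
    using shape_pos by (intro scaled_in_radius F_GE_less_1 lam_pos) (simp_all add: F_GE_nonneg)
  then show ?thesis
    using shape_pos C_theta_pos
    by (simp add: BGEPS_f0_def Let_def diag_density_def PS_C_eq_C deriv_powser field_simps)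
qed

lemma measure_BGEPS_measure:
  assumes A: "A \<in> sets borel" "A \<subseteq> {0<..} \<times> {0<..}" and finite: "emeasure BGEPS_measure A \<noteq> \<infinity>"
  shows "measure BGEPS_measure A =
      (LINT p : A \<inter> {p. fst p < snd p} | lborel. BGEPS_f1 a \<alpha>1 \<alpha>2 \<alpha>3 lam \<theta> (fst p) (snd p))
    + (LINT p : A \<inter> {p. snd p < fst p} | lborel. BGEPS_f2 a \<alpha>1 \<alpha>2 \<alpha>3 lam \<theta> (fst p) (snd p))
    + (LINT y : {y. (y, y) \<in> A} | lborel. BGEPS_f0 a \<alpha>1 \<alpha>2 \<alpha>3 lam \<theta> y)"
proof -
  have diag_meas: "(\<lambda>y::real. (y, y)) \<in> borel_measurable borel"
    by (intro borel_measurable_continuous_onI continuous_intros)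
  have diag_A: "{y. (y, y) \<in> A} \<in> sets borel"
    using measurable_sets[OF diag_meas A(1)] by (simp add: vimage_def)
  have pos: "0 < fst p" "0 < snd p" if "p \<in> A" for p
    using A(2) that by (auto simp: mem_Times_iff)
  have "measure BGEPS_measure A = measure (density lborel (\<lambda>p. ennreal (dens_upper p))) A
      + measure (density lborel (\<lambda>p. ennreal (dens_lower p))) A
      + measure (distr (density lborel (\<lambda>y. ennreal (dens_diag y))) borel (\<lambda>y. (y, y))) A"
    using finite emeasure_BGEPS_measure[OF A(1)]
    by (simp add: measure_def enn2real_plus less_top)
  also have "measure (density lborel (\<lambda>p. ennreal (dens_upper p))) A
      = (LINT p : A \<inter> {p. fst p < snd p} | lborel. BGEPS_f1 a \<alpha>1 \<alpha>2 \<alpha>3 lam \<theta> (fst p) (snd p))"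
    unfolding measure_density_eq_set_integral[of dens_upper lborel A, OF _ dens_upper_nonneg, simplified, OF A(1)]
      set_lebesgue_integral_def
    by (intro Bochner_Integration.integral_cong) (auto simp: dens_upper_def BGEPS_f1_eq pos indicator_def)
  also have "measure (density lborel (\<lambda>p. ennreal (dens_lower p))) A
      = (LINT p : A \<inter> {p. snd p < fst p} | lborel. BGEPS_f2 a \<alpha>1 \<alpha>2 \<alpha>3 lam \<theta> (fst p) (snd p))"
    unfolding measure_density_eq_set_integral[of dens_lower lborel A, OF _ dens_lower_nonneg, simplified, OF A(1)]
      set_lebesgue_integral_def
    by (intro Bochner_Integration.integral_cong) (auto simp: dens_lower_def BGEPS_f2_eq pos indicator_def)
  also have "measure (distr (density lborel (\<lambda>y. ennreal (dens_diag y))) borel (\<lambda>y. (y, y))) A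
      = (LINT y : {y. (y, y) \<in> A} | lborel. BGEPS_f0 a \<alpha>1 \<alpha>2 \<alpha>3 lam \<theta> y)"
  proof -
    have "(\<lambda>y::real. (y, y)) \<in> measurable (density lborel (\<lambda>y. ennreal (dens_diag y))) borel"
      using diag_meas by simp
    then have "measure (distr (density lborel (\<lambda>y. ennreal (dens_diag y))) borel (\<lambda>y. (y, y))) A
        = measure (density lborel (\<lambda>y. ennreal (dens_diag y))) {y. (y, y) \<in> A}"
      using A(1) by (simp add: measure_distr vimage_def)
    also have "\<dots> = (LINT y : {y. (y, y) \<in> A} | lborel. dens_diag y)"
      by (rule measure_density_eq_set_integral) (simp_all add: dens_diag_nonneg diag_A)
    also have "\<dots> = (LINT y : {y. (y, y) \<in> A} | lborel. BGEPS_f0 a \<alpha>1 \<alpha>2 \<alpha>3 lam \<theta> y)"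
      unfolding set_lebesgue_integral_def
      using pos[of "(y, y)" for y]
      by (intro Bochner_Integration.integral_cong) (auto simp: dens_diag_def BGEPS_f0_eq indicator_def)
    finally show ?thesis .
  qed
  finally show ?thesis .
qed

end

theorem theorem1:
  fixes a :: "nat \<Rightarrow> real" and s \<theta> \<alpha>1 \<alpha>2 \<alpha>3 lam :: real
    and M :: "'w measure" and Y :: "'w \<Rightarrow> real \<times> real"
  assumes a_nonneg: "\<And>n. n \<ge> 1 \<Longrightarrow> a n \<ge> 0"
    and C_finite: "\<And>t. t \<in> {0<..<s} \<Longrightarrow> summable (\<lambda>n. a (Suc n) * t ^ Suc n)"
    and theta: "\<theta> \<in> {0<..<s}" and C_pos: "PS_C a \<theta> > 0"
    and pos: "\<alpha>1 > 0" "\<alpha>2 > 0" "\<alpha>3 > 0" "lam > 0"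
    and M: "prob_space M"
    and Y_meas: "Y \<in> borel_measurable M"
    and cdf: "\<And>y1 y2. measure M {\<omega> \<in> space M. fst (Y \<omega>) \<le> y1 \<and> snd (Y \<omega>) \<le> y2}
                 = BGEPS_cdf a \<alpha>1 \<alpha>2 \<alpha>3 lam \<theta> y1 y2"
  shows "\<forall>A \<in> sets (borel :: (real \<times> real) measure). A \<subseteq> {0<..} \<times> {0<..} \<longrightarrow>
           measure M (Y -` A \<inter> space M) =
             (LINT p : A \<inter> {p. fst p < snd p} | lborel. BGEPS_f1 a \<alpha>1 \<alpha>2 \<alpha>3 lam \<theta> (fst p) (snd p))
           + (LINT p : A \<inter> {p. snd p < fst p} | lborel. BGEPS_f2 a \<alpha>1 \<alpha>2 \<alpha>3 lam \<theta> (fst p) (snd p))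
           + (LINT y : {y. (y, y) \<in> A} | lborel. BGEPS_f0 a \<alpha>1 \<alpha>2 \<alpha>3 lam \<theta> y)"
proof -
  have "summable (\<lambda>n. (if n = 0 then 0 else a n) * \<theta> ^ n)"
    using C_finite[OF theta] by (subst summable_Suc_iff[symmetric]) simp
  then interpret BGEPS_model a \<theta> lam \<alpha>1 \<alpha>2 \<alpha>3
    using a_nonneg theta C_pos pos by unfold_locales auto
  interpret prob_space M by (rule M)
  have law: "distr M borel Y = BGEPS_measure"
    by (rule distr_eq_BGEPS_measure[OF M Y_meas cdf])
  have "measure M (Y -` A \<inter> space M) = measure BGEPS_measure A"
    and "emeasure BGEPS_measure A \<noteq> \<infinity>" if "A \<in> sets borel" for A
    using Y_meas that by (simp_all add: law[symmetric] measure_distr emeasure_distr emeasure_eq_measure)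
  then show ?thesis
    using measure_BGEPS_measure by simp
qed

end
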